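(* Let $n=2$, $O_1=\{p\in M: v_1(p)\ge v_2(p)\}$, $O_2=\{q\in M: v_1(q)<v_2(q)\}$, and assume that in $(O_1,O_2)$ agent 2 strongly envies agent 1. Consider the following procedure LocalSearch applied to an allocation $(A_1,A_2)$ in which agent 2 does not strongly envy agent 1: while agent 1 strongly envies agent 2, pick an arbitrary item $g\in A_2\setminus O_2$ and set $A_2\leftarrow A_2\setminus\{g\}$; then, if $v_2(A_2)<v_2(A_1)$ (agent 2 envies agent 1 in the partial allocation $(A_1,A_2)$), set $(A_1,A_2)\leftarrow(A_2\cup\{g\},A_1)$, and otherwise set $(A_1,A_2)\leftarrow(A_1\cup\{g\},A_2)$. Then whenever the loop condition holds an item $g\in A_2\setminus O_2$ exists, the loop terminates after at most $m$ iterations, and the output allocation is EF1 and has social welfare at least that of the input allocation.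
   Context: Two agents with additive valuations $v_1,v_2:2^M\to\mathbb{R}_{\ge0}$ over items $M=[m]$; an allocation $(A_1,A_2)$ is a partition of $M$; social welfare is $v_1(A_1)+v_2(A_2)$. Agent $i$ envies $j$ if $v_i(A_i)<v_i(A_j)$; agent $i$ strongly envies $j$ if $A_j\ne\emptyset$ and $v_i(A_i)<v_i(A_j\setminus\{g\})$ for all $g\in A_j$. An allocation is EF1 if no agent strongly envies the other. *)

theory Defs
  imports Complex_Main
begin

text \<open>Additive valuations are given by item values v :: 'a => real; the value of a
bundle S is sum v S. Allocations for two agents are pairs (A1, A2).\<close>

definition is_allocation :: "'a set \<Rightarrow> 'a set \<times> 'a set \<Rightarrow> bool" where
  "is_allocation M A \<longleftrightarrow> fst A \<union> snd A = M \<and> fst A \<inter> snd A = {}"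

definition strongly_envies :: "('a \<Rightarrow> real) \<Rightarrow> 'a set \<Rightarrow> 'a set \<Rightarrow> bool" where
  "strongly_envies v Ai Aj \<longleftrightarrow> Aj \<noteq> {} \<and> (\<forall>g\<in>Aj. sum v Ai < sum v (Aj - {g}))"

definition EF1 :: "('a \<Rightarrow> real) \<Rightarrow> ('a \<Rightarrow> real) \<Rightarrow> 'a set \<times> 'a set \<Rightarrow> bool" where
  "EF1 v1 v2 A \<longleftrightarrow> \<not> strongly_envies v1 (fst A) (snd A) \<and> \<not> strongly_envies v2 (snd A) (fst A)"

definition social_welfare :: "('a \<Rightarrow> real) \<Rightarrow> ('a \<Rightarrow> real) \<Rightarrow> 'a set \<times> 'a set \<Rightarrow> real" where
  "social_welfare v1 v2 A = sum v1 (fst A) + sum v2 (snd A)"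

text \<open>One iteration of the while loop of LocalSearch (nondeterministic choice of g
in A2 minus O2). The loop guard (agent 1 strongly envies agent 2) is part of the step.\<close>
definition ls_step :: "('a \<Rightarrow> real) \<Rightarrow> ('a \<Rightarrow> real) \<Rightarrow> 'a set \<Rightarrow>
    'a set \<times> 'a set \<Rightarrow> 'a set \<times> 'a set \<Rightarrow> bool" where
  "ls_step v1 v2 O2 A B \<longleftrightarrow>
     strongly_envies v1 (fst A) (snd A) \<and>
     (\<exists>g \<in> snd A - O2.
        (let A1 = fst A; A2' = snd A - {g} in
          if sum v2 A2' < sum v2 A1 then B = (A2' \<union> {g}, A1)
          else B = (A1 \<union> {g}, A2')))"

end

theory Submission
  imports Defs
begin

text \<open>Each iteration either swaps the bundles, after which agent 1 (now holding the bundle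
it strongly envied) can no longer strongly envy, or moves one item from agent 2 to agent 1;
hence at most card A2 iterations. Every step leaves agent 2 without strong envy, because the
moved item g witnesses EF1, and raises welfare, because g lies outside O2, i.e.
v2 g \<le> v1 g. Finally, if agent 1 strongly envied a bundle inside O2, then
v1(O1) \<le> v1(A1) < v1(A2) \<le> v1(O2) < v2(O2) < v2(O1 - h) \<le> v2(O1) \<le> v1(O1),
a contradiction; so an item g in A2 - O2 is always available.\<close>

lemma strongly_envies_asym:
  fixes v :: "'a \<Rightarrow> real"
  assumes "finite X" "finite Y" "\<forall>x\<in>X \<union> Y. 0 \<le> v x"
    and "strongly_envies v X Y"
  shows "\<not> strongly_envies v Y X"
proof
  assume "strongly_envies v Y X"
  then obtain h where "h \<in> X" "sum v Y < sum v (X - {h})"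
    by (auto simp: strongly_envies_def)
  moreover obtain g where "g \<in> Y" "sum v X < sum v (Y - {g})"
    using assms(4) by (auto simp: strongly_envies_def)
  moreover have "sum v (X - {h}) \<le> sum v X" "sum v (Y - {g}) \<le> sum v Y"
    using assms(1-3) by (auto intro: sum_mono2)
  ultimately show False by linarith
qed

lemma ls_step_cases:
  assumes "ls_step v1 v2 O2 (A1, A2) B"
  obtains (swap) g where "g \<in> A2 - O2" "strongly_envies v1 A1 A2"
      "sum v2 (A2 - {g}) < sum v2 A1" "B = (A2, A1)"
  | (give) g where "g \<in> A2 - O2" "strongly_envies v1 A1 A2"
      "\<not> sum v2 (A2 - {g}) < sum v2 A1" "B = (insert g A1, A2 - {g})"
  using assms unfolding ls_step_def Let_def
  by (auto simp: insert_absorb split: if_splits)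

lemma ls_step_is_allocation:
  assumes "is_allocation M A" "ls_step v1 v2 O2 A B"
  shows "is_allocation M B"
proof -
  obtain A1 A2 where A: "A = (A1, A2)" by fastforce
  from assms(2)[unfolded A] show ?thesis
    by (cases rule: ls_step_cases) (use assms(1) A in \<open>auto simp: is_allocation_def\<close>)
qed

lemma ls_step_agent2_not_strongly_envies:
  assumes "is_allocation M A" "ls_step v1 v2 O2 A B"
  shows "\<not> strongly_envies v2 (snd B) (fst B)"
proof -
  obtain A1 A2 where A: "A = (A1, A2)" by fastforce
  from assms(2)[unfolded A] show ?thesis
  proof (cases rule: ls_step_cases)
    case (swap g)
    then show ?thesis by (force simp: strongly_envies_def)
  next
    case (give g)
    then have "insert g A1 - {g} = A1"
      using assms(1) A by (auto simp: is_allocation_def)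
    with give show ?thesis by (force simp: strongly_envies_def)
  qed
qed

locale nonneg_valuations =
  fixes M :: "'a set" and v1 v2 :: "'a \<Rightarrow> real"
  assumes finite_items: "finite M"
    and v1_nonneg: "\<forall>x\<in>M. 0 \<le> v1 x"
    and v2_nonneg: "\<forall>x\<in>M. 0 \<le> v2 x"
begin

lemma allocation_finite:
  assumes "is_allocation M (A1, A2)"
  shows "finite A1" "finite A2"
  using assms finite_items by (auto simp: is_allocation_def intro: finite_subset)

lemma ls_step_welfare_mono:
  assumes "is_allocation M A" "ls_step v1 v2 O2 A B"
    and outside_O2: "\<forall>g\<in>M - O2. v2 g \<le> v1 g"
  shows "social_welfare v1 v2 A \<le> social_welfare v1 v2 B"
proof -
  obtain A1 A2 where A: "A = (A1, A2)" by fastforce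
  have fin: "finite A1" "finite A2" using allocation_finite assms(1) A by auto
  from assms(2)[unfolded A] show ?thesis
  proof (cases rule: ls_step_cases)
    case (swap g)
    have "g \<in> M" using swap(1) assms(1) A by (auto simp: is_allocation_def)
    then have "v2 g \<le> v1 g" using swap(1) outside_O2 by blast
    moreover have "sum v1 A1 < sum v1 (A2 - {g})"
      using swap(1,2) by (auto simp: strongly_envies_def)
    moreover have "sum v1 A2 = v1 g + sum v1 (A2 - {g})" "sum v2 A2 = v2 g + sum v2 (A2 - {g})"
      using fin swap(1) by (auto simp: sum.remove)
    ultimately show ?thesis
      using swap(3,4) A by (simp add: social_welfare_def)
  next
    case (give g)
    have "g \<in> M" "g \<notin> A1" using give(1) assms(1) A by (auto simp: is_allocation_def)
    moreover have "sum v2 A2 = v2 g + sum v2 (A2 - {g})"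
      using fin give(1) by (auto simp: sum.remove)
    ultimately show ?thesis
      using give(1,4) A fin outside_O2 by (auto simp: social_welfare_def)
  qed
qed

lemma ls_step_after_swap_stops:
  assumes "is_allocation M (A1, A2)" "ls_step v1 v2 O2 (A1, A2) B"
    and "B = (A2, A1)"
  shows "\<not> ls_step v1 v2 O2 B C"
proof -
  have "strongly_envies v1 A1 A2" using assms(2) by (simp add: ls_step_def)
  then have "\<not> strongly_envies v1 A2 A1"
    using assms(1) allocation_finite v1_nonneg
    by (intro strongly_envies_asym) (auto simp: is_allocation_def)
  then show ?thesis using assms(3) by (simp add: ls_step_def)
qed

lemma ls_steps_bounded:
  assumes "is_allocation M A" "(ls_step v1 v2 O2 ^^ k) A B"
  shows "k \<le> card (snd A)"
  using assms
proof (induction k arbitrary: A)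
  case 0
  then show ?case by simp
next
  case (Suc k)
  obtain C where step: "ls_step v1 v2 O2 A C" and rest: "(ls_step v1 v2 O2 ^^ k) C B"
    using Suc.prems(2) by (metis relpowp_Suc_D2)
  obtain A1 A2 where A: "A = (A1, A2)" by fastforce
  have fin: "finite A2" using allocation_finite Suc.prems(1) A by auto
  from step[unfolded A] show ?case
  proof (cases rule: ls_step_cases)
    case (swap g)
    have "k = 0"
    proof (rule ccontr)
      assume "k \<noteq> 0"
      then obtain D where "ls_step v1 v2 O2 C D"
        using rest by (metis not0_implies_Suc relpowp_Suc_D2)
      with ls_step_after_swap_stops Suc.prems(1) step swap(4) A show False by blast
    qed
    then show ?thesis using swap(1) fin A by (auto simp: Suc_le_eq card_gt_0_iff)
  next
    case (give g)
    have "k \<le> card (snd C)"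
      using Suc.IH rest ls_step_is_allocation Suc.prems(1) step by blast
    moreover have "card A2 > 0" using give(1) fin by (auto simp: card_gt_0_iff)
    ultimately show ?thesis using give(1,4) fin A by simp
  qed
qed

lemma strongly_envies_requires_item_outside_O2:
  assumes O2_def: "O2 = {q\<in>M. v1 q < v2 q}"
    and O_env: "strongly_envies v2 O2 (M - O2)"
    and alloc: "is_allocation M (B1, B2)"
    and envy: "strongly_envies v1 B1 B2"
  shows "B2 - O2 \<noteq> {}"
proof
  assume "B2 - O2 = {}"
  then have B2_O2: "B2 \<subseteq> O2" and O1_B1: "M - O2 \<subseteq> B1"
    using alloc by (auto simp: is_allocation_def)
  have fin: "finite B1" "finite B2" "finite O2" "finite (M - O2)"
    using allocation_finite alloc finite_items O2_def by auto
  obtain g where g: "g \<in> B2" "sum v1 B1 < sum v1 (B2 - {g})"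
    using envy by (auto simp: strongly_envies_def)
  obtain h where "sum v2 O2 < sum v2 (M - O2 - {h})"
    using O_env by (auto simp: strongly_envies_def)
  moreover have "sum v1 (M - O2) \<le> sum v1 B1"
    using fin O1_B1 alloc v1_nonneg by (intro sum_mono2) (auto simp: is_allocation_def)
  moreover have "sum v1 (B2 - {g}) \<le> sum v1 O2"
    using fin B2_O2 O2_def v1_nonneg by (intro sum_mono2) auto
  moreover have "sum v1 O2 < sum v2 O2"
    using fin g(1) B2_O2 O2_def by (intro sum_strict_mono) auto
  moreover have "sum v2 (M - O2 - {h}) \<le> sum v2 (M - O2)"
    using fin v2_nonneg by (intro sum_mono2) auto
  moreover have "sum v2 (M - O2) \<le> sum v1 (M - O2)"
    using O2_def by (intro sum_mono) auto
  ultimately show False using g(2) by linarith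
qed

end

theorem lemma2:
  fixes M :: "'a set" and v1 v2 :: "'a \<Rightarrow> real" and A :: "'a set \<times> 'a set"
    and O1 O2 :: "'a set"
  assumes finM: "finite M"
    and nonneg1: "\<forall>x\<in>M. v1 x \<ge> 0"
    and nonneg2: "\<forall>x\<in>M. v2 x \<ge> 0"
    and O1_def: "O1 = {p\<in>M. v1 p \<ge> v2 p}"
    and O2_def: "O2 = {q\<in>M. v1 q < v2 q}"
    and O_env: "strongly_envies v2 O2 O1"
    and alloc: "is_allocation M A"
    and no_env2: "\<not> strongly_envies v2 (snd A) (fst A)"
  shows "(\<forall>B. (ls_step v1 v2 O2)\<^sup>*\<^sup>* A B \<longrightarrow> strongly_envies v1 (fst B) (snd B)
              \<longrightarrow> snd B - O2 \<noteq> {})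
       \<and> (\<forall>k B. (ls_step v1 v2 O2 ^^ k) A B \<longrightarrow> k \<le> card M)
       \<and> (\<forall>B. (ls_step v1 v2 O2)\<^sup>*\<^sup>* A B \<longrightarrow> \<not> strongly_envies v1 (fst B) (snd B)
              \<longrightarrow> is_allocation M B \<and> EF1 v1 v2 B
                  \<and> social_welfare v1 v2 B \<ge> social_welfare v1 v2 A)"
proof -
  interpret nonneg_valuations M v1 v2
    using finM nonneg1 nonneg2 by unfold_locales
  have reachable: "is_allocation M B \<and> \<not> strongly_envies v2 (snd B) (fst B)
      \<and> social_welfare v1 v2 A \<le> social_welfare v1 v2 B"
    if "(ls_step v1 v2 O2)\<^sup>*\<^sup>* A B" for B
    using that
  proof (induction rule: rtranclp_induct)
    case (step B C)
    have "\<forall>g\<in>M - O2. v2 g \<le> v1 g" using O2_def by auto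
    with step show ?case
      using ls_step_is_allocation ls_step_agent2_not_strongly_envies ls_step_welfare_mono
      by (meson order.trans)
  qed (use alloc no_env2 in simp)
  have "O1 = M - O2" using O1_def O2_def by auto
  with O_env have "snd B - O2 \<noteq> {}"
    if "(ls_step v1 v2 O2)\<^sup>*\<^sup>* A B" "strongly_envies v1 (fst B) (snd B)" for B
    using strongly_envies_requires_item_outside_O2[OF O2_def, of "fst B" "snd B"]
      reachable[OF that(1)] that(2) by simp
  moreover have "k \<le> card M" if "(ls_step v1 v2 O2 ^^ k) A B" for k B
  proof -
    have "card (snd A) \<le> card M"
      using alloc finM by (intro card_mono) (auto simp: is_allocation_def)
    with ls_steps_bounded[OF alloc that] show ?thesis by simp
  qed
  ultimately show ?thesis
    using reachable by (auto simp: EF1_def)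
qed

end
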